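(* Let $\lambda>1$, $b>0$, $a\in\mathbb{R}$ and consider $$x_{n+1}=x_{n-1}^{\lambda}e^{a-bx_n-x_{n-1}},\qquad n\ge1,$$ with non-negative initial values $x_0,x_1$. (a) Every non-negative solution converges to $0$ if and only if $a<(\lambda-1)[1-\ln(\lambda-1)]$. (b) If $(\lambda-1)[1-\ln(\lambda-1)]<a<(\lambda-1)[1-\ln(\lambda-1)+\ln(b+1)]$, then the equation has no positive fixed points, but it has solutions with all terms positive that do not converge to $0$. (c) Assume $b\le\frac{\lambda-1}{\lambda}e^{1/(\lambda-1)}-1$ and $(\lambda-1)[1-\ln(\lambda-1)+\ln(b+1)]\le a\le\lambda-(\lambda-1)\ln\lambda$, and let $x^*$ be the smallest positive fixed point of the equation (i.e. the smallest positive solution of $x=x^\lambda e^{a-(b+1)x}$). Then there are initial values $x_0,x_1\in(0,x^* )$ whose solution is positive and does not converge to $0$. (d) Under the hypotheses of (c), for every initial pair $(x_0,x_1)\in([x^*,\lambda]\times[0,x^*])\cup([0,x^*]\times[x^*,\lambda])$ the corresponding solution does not converge to $0$.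
   Context: A fixed point of the equation is a positive number $x$ with $x=x^{\lambda}e^{a-(b+1)x}$. *)

theory Defs
  imports Complex_Main
begin

fun sol :: "real \<Rightarrow> real \<Rightarrow> real \<Rightarrow> real \<Rightarrow> real \<Rightarrow> nat \<Rightarrow> real" where
  "sol lam a b x0 x1 0 = x0"
| "sol lam a b x0 x1 (Suc 0) = x1"
| "sol lam a b x0 x1 (Suc (Suc n)) =
     (sol lam a b x0 x1 n) powr lam * exp (a - b * sol lam a b x0 x1 (Suc n) - sol lam a b x0 x1 n)"

definition fixed_pt :: "real \<Rightarrow> real \<Rightarrow> real \<Rightarrow> real \<Rightarrow> bool" where
  "fixed_pt lam a b x \<longleftrightarrow> x > 0 \<and> x = x powr lam * exp (a - (b + 1) * x)"

end

theory Submission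
  imports Defs
begin

text \<open>Everything rests on the inequality \<open>l ln u - u \<le> l ln l - l\<close> (from \<open>ln t \<le> t - 1\<close>), i.e. on
  the shape of \<open>u \<mapsto> u powr l * exp (c - u)\<close>. Below the threshold
  \<open>T = (lam - 1) (1 - ln (lam - 1))\<close> it gives \<open>x (n + 2) \<le> exp (a - T) x n\<close>, so every solution
  decays geometrically; applied at \<open>(b + 1) x\<close> it excludes positive fixed points in (b); at
  \<open>a = T\<close> the pair \<open>(lam - 1, 0)\<close> is a 2-cycle. Above \<open>T\<close> a
  shooting argument applies: with \<open>x1 = e\<close> small the odd terms stay below \<open>e\<close>, and as \<open>x0\<close> runs
  through \<open>[e, lam - 1]\<close> the even terms leave the strip \<open>[e, lam - 1]\<close> downwards at one end and
  upwards at the other; the open sets of parameters leaving on either side cannot cover the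
  interval, and a remaining parameter has its even subsequence trapped in the strip.
  For (c) and (d), the union of the rectangles \<open>[x*, lam] \<times> [0, x*]\<close> and \<open>[0, x*] \<times> [x*, lam]\<close>
  is invariant under \<open>(x (n - 1), x n) \<mapsto> (x n, x (n + 1))\<close>, so one of any two consecutive terms
  is at least \<open>x*\<close>; a start just below \<open>x*\<close> with \<open>x1 = x* / 2\<close> enters it after one step.\<close>

lemma not_tendsto_zero_if_frequently_ge:
  fixes f :: "nat \<Rightarrow> real"
  assumes "0 < d" "frequently (\<lambda>n. d \<le> f n) sequentially"
  shows "\<not> f \<longlonglongrightarrow> 0"
proof
  assume "f \<longlonglongrightarrow> 0"
  then have "eventually (\<lambda>n. f n < d) sequentially"
    using assms(1) by (rule order_tendstoD)
  then have "eventually (\<lambda>n. \<not> d \<le> f n) sequentially"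
    by (rule eventually_mono) simp
  with assms(2) show False
    by (simp add: frequently_def)
qed

lemma tendsto_zero_if_two_step_contraction:
  fixes f :: "nat \<Rightarrow> real"
  assumes "0 < c" "c < 1" "\<And>n. 0 \<le> f n" "\<And>n. f (Suc (Suc n)) \<le> c * f n"
  shows "f \<longlonglongrightarrow> 0"
proof -
  define r where "r = sqrt c"
  have r: "0 < r" "r < 1" "r\<^sup>2 = c"
    using assms by (simp_all add: r_def)
  define M where "M = max (f 0) (f 1 / r)"
  have bound: "f n \<le> r ^ n * M" for n
  proof (induction n rule: induct_nat_012)
    case 0
    then show ?case by (simp add: M_def)
  next
    case 1
    have "f 1 = r * (f 1 / r)"
      using r by simp
    also have "\<dots> \<le> r * M"
      using r by (intro mult_left_mono) (auto simp: M_def)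
    finally show ?case by simp
  next
    case (ge2 n)
    have "f (Suc (Suc n)) \<le> c * (r ^ n * M)"
      using assms ge2(1) by (meson mult_left_mono order.trans less_imp_le)
    also have "c * (r ^ n * M) = r ^ Suc (Suc n) * M"
      unfolding r(3)[symmetric] by (simp add: power2_eq_square mult_ac)
    finally show ?case .
  qed
  have "(\<lambda>n. r ^ n * M) \<longlonglongrightarrow> 0"
    using r by (intro tendsto_mult_left_zero LIMSEQ_power_zero) simp
  moreover have "eventually (\<lambda>n. 0 \<le> f n) sequentially" "eventually (\<lambda>n. f n \<le> r ^ n * M) sequentially"
    using assms(3) bound by simp_all
  ultimately show ?thesis
    by (intro tendsto_sandwich[of "\<lambda>_. 0" f sequentially "\<lambda>n. r ^ n * M"]) simp_all
qed

definition exits_below :: "(nat \<Rightarrow> real) \<Rightarrow> real \<Rightarrow> real \<Rightarrow> bool" where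
  "exits_below s lo hi \<longleftrightarrow> (\<exists>k. s k < lo \<and> (\<forall>j<k. s j < hi))"

definition exits_above :: "(nat \<Rightarrow> real) \<Rightarrow> real \<Rightarrow> real \<Rightarrow> bool" where
  "exits_above s lo hi \<longleftrightarrow> (\<exists>k. hi < s k \<and> (\<forall>j<k. lo < s j))"

lemma not_exits_below_and_above:
  assumes "lo < hi"
  shows "\<not> (exits_below s lo hi \<and> exits_above s lo hi)"
proof
  assume "exits_below s lo hi \<and> exits_above s lo hi"
  then obtain k1 k2 where "s k1 < lo" "\<forall>j<k1. s j < hi" "hi < s k2" "\<forall>j<k2. lo < s j"
    by (auto simp: exits_below_def exits_above_def)
  with assms show False
    by (cases k1 k2 rule: linorder_cases) force+
qed

lemma open_exits_below:
  assumes "open S" "\<And>k. continuous_on S (\<lambda>x. s x k)"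
  shows "open {x\<in>S. exits_below (s x) lo hi}"
proof -
  have vimage: "open ((\<lambda>x. s x k) -` B \<inter> S)" if "open B" for k B
    using assms that by (simp add: continuous_on_open_vimage)
  have "{x\<in>S. exits_below (s x) lo hi} =
      (\<Union>k. ((\<lambda>x. s x k) -` {..<lo} \<inter> S) \<inter> (\<Inter>j\<in>{..<k}. (\<lambda>x. s x j) -` {..<hi} \<inter> S))"
    unfolding exits_below_def by blast
  then show ?thesis
    by (simp only:) (intro open_UN open_Int open_INT ballI vimage open_lessThan finite_lessThan)
qed

lemma open_exits_above:
  assumes "open S" "\<And>k. continuous_on S (\<lambda>x. s x k)"
  shows "open {x\<in>S. exits_above (s x) lo hi}"
proof -
  have "{x\<in>S. exits_above (s x) lo hi} = {x\<in>S. exits_below (\<lambda>k. - s x k) (- hi) (- lo)}"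
    by (auto simp: exits_below_def exits_above_def)
  then show ?thesis
    using assms by (simp only:) (intro open_exits_below continuous_intros)
qed

lemma exists_never_exits:
  fixes s :: "real \<Rightarrow> nat \<Rightarrow> real"
  assumes "open S" "{p..q} \<subseteq> S" "\<And>k. continuous_on S (\<lambda>x. s x k)" "p \<le> q" "lo < hi"
    and "exits_below (s p) lo hi" "exits_above (s q) lo hi"
  shows "\<exists>x\<in>{p..q}. \<not> exits_below (s x) lo hi \<and> \<not> exits_above (s x) lo hi"
proof (rule ccontr)
  let ?B = "{x\<in>S. exits_below (s x) lo hi}" and ?A = "{x\<in>S. exits_above (s x) lo hi}"
  assume "\<not> ?thesis"
  then have cover: "{p..q} \<subseteq> ?B \<union> ?A"
    using assms(2) by auto
  have "open ?B"
    by (rule open_exits_below) (use assms in auto)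
  moreover have "open ?A"
    by (rule open_exits_above) (use assms in auto)
  moreover have "?B \<inter> ?A \<inter> {p..q} = {}"
    using not_exits_below_and_above[OF assms(5)] by auto
  ultimately have "?B \<inter> {p..q} = {} \<or> ?A \<inter> {p..q} = {}"
    using cover by (rule connectedD[OF connected_Icc])
  moreover have "p \<in> ?B \<inter> {p..q}" "q \<in> ?A \<inter> {p..q}"
    using assms(2,4,6,7) by auto
  ultimately show False
    by blast
qed

lemma stays_between_if_never_exits:
  fixes s :: "nat \<Rightarrow> real"
  assumes "lo \<le> s 0" "s 0 \<le> hi" "\<not> exits_below s lo hi" "\<not> exits_above s lo hi"
    and "\<And>k. s k = lo \<Longrightarrow> s (Suc k) < lo" "\<And>k. s k = hi \<Longrightarrow> hi < s (Suc k)"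
  shows "lo \<le> s k \<and> s k \<le> hi"
proof (induction k rule: less_induct)
  case (less k)
  show ?case
  proof (rule ccontr)
    assume out: "\<not> (lo \<le> s k \<and> s k \<le> hi)"
    then consider "s k < lo" | "hi < s k"
      by linarith
    then show False
    proof cases
      case 1
      with assms(3) obtain j where "j < k" "hi \<le> s j"
        unfolding exits_below_def by (meson not_less)
      with less have "s j = hi" "Suc j \<le> k"
        by force+
      then have "hi < s (Suc j)"
        by (intro assms(6))
      with less.IH[of "Suc j"] \<open>Suc j \<le> k\<close> 1 assms(1,2) show False
        by (cases "Suc j = k") auto
    next
      case 2
      with assms(4) obtain j where "j < k" "s j \<le> lo"
        unfolding exits_above_def by (meson not_less)
      with less have "s j = lo" "Suc j \<le> k"
        by force+
      then have "s (Suc j) < lo"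
        by (intro assms(5))
      with less.IH[of "Suc j"] \<open>Suc j \<le> k\<close> 2 assms(1,2) show False
        by (cases "Suc j = k") auto
    qed
  qed
qed

lemma mult_ln_minus_le:
  fixes l x :: real
  assumes "0 < l" "0 < x"
  shows "l * ln x - x \<le> l * ln l - l"
proof -
  have "ln (x / l) \<le> x / l - 1"
    using assms by (intro ln_le_minus_one) simp
  then have "l * (ln x - ln l) \<le> l * (x / l - 1)"
    using assms by (simp add: ln_div)
  then show ?thesis
    using assms by (simp add: algebra_simps)
qed

lemma mult_ln_minus_mono:
  fixes l u v :: real
  assumes "0 < u" "u \<le> v" "v \<le> l"
  shows "l * ln u - u \<le> l * ln v - v"
proof -
  have "ln (u / v) \<le> u / v - 1"
    using assms by (intro ln_le_minus_one) simp
  then have "l * (ln u - ln v) \<le> l * (u / v - 1)"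
    using assms by (intro mult_left_mono) (auto simp: ln_div)
  also have "\<dots> = (l / v) * (u - v)"
    using assms by (simp add: field_simps)
  also have "\<dots> \<le> 1 * (u - v)"
    using assms by (intro mult_right_mono_neg) auto
  finally show ?thesis
    by (simp add: algebra_simps)
qed

definition step_map :: "real \<Rightarrow> real \<Rightarrow> real \<Rightarrow> real \<Rightarrow> real \<Rightarrow> real" where
  "step_map lam a b u v = u powr lam * exp (a - b * v - u)"

lemma sol_Suc_Suc [simp]:
  "sol lam a b x0 x1 (Suc (Suc n)) = step_map lam a b (sol lam a b x0 x1 n) (sol lam a b x0 x1 (Suc n))"
  by (simp add: step_map_def)

declare sol.simps(3) [simp del]

lemma step_map_nonneg [simp]: "0 \<le> step_map lam a b u v"
  by (simp add: step_map_def)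

lemma step_map_pos: "0 < u \<Longrightarrow> 0 < step_map lam a b u v"
  by (simp add: step_map_def)

lemma step_map_zero [simp]: "step_map lam a b 0 v = 0"
  by (simp add: step_map_def)

lemma step_map_eq_exp: "0 < u \<Longrightarrow> step_map lam a b u v = exp (lam * ln u + a - b * v - u)"
  by (simp add: step_map_def powr_def exp_add[symmetric] algebra_simps)

lemma step_map_less_iff: "0 < u \<Longrightarrow> step_map lam a b u v < u \<longleftrightarrow> (lam - 1) * ln u + a - b * v - u < 0"
proof -
  assume "0 < u"
  then have "step_map lam a b u v < u \<longleftrightarrow> exp (lam * ln u + a - b * v - u) < exp (ln u)"
    by (simp add: step_map_eq_exp)
  then show ?thesis by (simp add: algebra_simps)
qed

lemma step_map_greater_iff: "0 < u \<Longrightarrow> u < step_map lam a b u v \<longleftrightarrow> 0 < (lam - 1) * ln u + a - b * v - u"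
proof -
  assume "0 < u"
  then have "u < step_map lam a b u v \<longleftrightarrow> exp (ln u) < exp (lam * ln u + a - b * v - u)"
    by (simp add: step_map_eq_exp)
  then show ?thesis by (simp add: algebra_simps)
qed

lemma step_map_antimono_right: "0 \<le> b \<Longrightarrow> v \<le> v' \<Longrightarrow> step_map lam a b u v' \<le> step_map lam a b u v"
  by (simp add: step_map_def mult_left_mono)

lemma step_map_le_peak:
  assumes "0 < lam" "0 \<le> u"
  shows "step_map lam a b u v \<le> step_map lam a b lam v"
proof (cases "u = 0")
  case True
  then show ?thesis by simp
next
  case False
  then have "lam * ln u - u \<le> lam * ln lam - lam"
    using assms by (intro mult_ln_minus_le) auto
  then show ?thesis
    using assms False by (simp add: step_map_eq_exp)
qed

lemma step_map_le_lam:
  assumes "1 < lam" "a \<le> lam - (lam - 1) * ln lam" "0 \<le> b" "0 \<le> u" "0 \<le> v"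
  shows "step_map lam a b u v \<le> lam"
proof -
  have "step_map lam a b u v \<le> step_map lam a b u 0"
    using assms by (intro step_map_antimono_right)
  also have "\<dots> \<le> step_map lam a b lam 0"
    using assms by (intro step_map_le_peak) auto
  also have "\<dots> = exp (lam * ln lam + a - lam)"
    using assms(1) by (simp add: step_map_eq_exp)
  also have "\<dots> \<le> exp (ln lam)"
    using assms(2) by (simp add: algebra_simps)
  finally show ?thesis
    using assms(1) by simp
qed

lemma step_map_mono:
  assumes "0 \<le> u" "u \<le> u'" "u' \<le> lam"
  shows "step_map lam a b u v \<le> step_map lam a b u' v"
proof (cases "u = 0")
  case True
  then show ?thesis by simp
next
  case False
  then have "lam * ln u - u \<le> lam * ln u' - u'"
    using assms by (intro mult_ln_minus_mono) auto
  then show ?thesis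
    using assms False by (simp add: step_map_eq_exp)
qed

lemma step_map_le_contraction:
  assumes "1 < lam" "0 \<le> b" "0 \<le> u" "0 \<le> v"
  shows "step_map lam a b u v \<le> exp (a - (lam - 1) * (1 - ln (lam - 1))) * u"
proof (cases "u = 0")
  case True
  then show ?thesis by simp
next
  case False
  then have u: "0 < u" using assms by simp
  have "(lam - 1) * ln u - u \<le> (lam - 1) * ln (lam - 1) - (lam - 1)"
    using assms u by (intro mult_ln_minus_le) auto
  then have "lam * ln u + a - u \<le> ln u + (a - (lam - 1) * (1 - ln (lam - 1)))"
    by (simp add: algebra_simps)
  then have "step_map lam a b u 0 \<le> exp (ln u + (a - (lam - 1) * (1 - ln (lam - 1))))"
    using u by (simp add: step_map_eq_exp)
  moreover have "step_map lam a b u v \<le> step_map lam a b u 0"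
    using assms by (intro step_map_antimono_right)
  ultimately show ?thesis
    using u by (simp add: exp_add mult.commute)
qed

lemma step_map_less_if_small:
  assumes "1 < lam" "0 \<le> b" "0 \<le> v" "0 < u" "u \<le> e" "(lam - 1) * ln e + a \<le> 0"
  shows "step_map lam a b u v < u"
proof -
  have "(lam - 1) * ln u \<le> (lam - 1) * ln e"
    using assms by (intro mult_left_mono) auto
  moreover have "0 \<le> b * v"
    using assms by simp
  ultimately have "(lam - 1) * ln u + a - b * v - u < 0"
    using assms by linarith
  then show ?thesis
    using assms(4) by (simp add: step_map_less_iff)
qed

lemma step_map_greater_at_peak:
  assumes "1 < lam" "b * v < a - (lam - 1) * (1 - ln (lam - 1))"
  shows "lam - 1 < step_map lam a b (lam - 1) v"
proof -
  have "0 < (lam - 1) * ln (lam - 1) + a - b * v - (lam - 1)"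
    using assms(2) by (simp add: algebra_simps)
  then show ?thesis
    using assms(1) by (simp add: step_map_greater_iff)
qed

lemma fixed_pt_iff: "fixed_pt lam a b x \<longleftrightarrow> 0 < x \<and> step_map lam a b x x = x"
  by (auto simp: fixed_pt_def step_map_def algebra_simps)

lemma no_fixed_pt:
  assumes "1 < lam" "0 < b" "a < (lam - 1) * (1 - ln (lam - 1) + ln (b + 1))"
  shows "\<not> fixed_pt lam a b x"
proof
  assume "fixed_pt lam a b x"
  then have x: "0 < x" and "exp (lam * ln x + a - b * x - x) = x"
    by (auto simp: fixed_pt_iff step_map_eq_exp)
  then have "lam * ln x + a - b * x - x = ln x"
    by (metis ln_exp)
  then have fix_ln: "(lam - 1) * ln x + a - (b + 1) * x = 0"
    by (simp add: algebra_simps)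
  have "(lam - 1) * ln ((b + 1) * x) - (b + 1) * x \<le> (lam - 1) * ln (lam - 1) - (lam - 1)"
    using assms x by (intro mult_ln_minus_le) auto
  moreover have "ln ((b + 1) * x) = ln (b + 1) + ln x"
    using assms x by (simp add: ln_mult)
  ultimately have "(lam - 1) * ln x - (b + 1) * x \<le> (lam - 1) * (ln (lam - 1) - 1 - ln (b + 1))"
    by (simp add: algebra_simps)
  moreover have "(lam - 1) * (ln (lam - 1) - 1 - ln (b + 1)) = - ((lam - 1) * (1 - ln (lam - 1) + ln (b + 1)))"
    by (simp add: algebra_simps)
  ultimately show False
    using fix_ln assms(3) by linarith
qed

lemma sol_nonneg: "0 \<le> x0 \<Longrightarrow> 0 \<le> x1 \<Longrightarrow> 0 \<le> sol lam a b x0 x1 n"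
  by (induction n rule: induct_nat_012) auto

lemma sol_pos: "0 < x0 \<Longrightarrow> 0 < x1 \<Longrightarrow> 0 < sol lam a b x0 x1 n"
  by (induction n rule: induct_nat_012) (auto intro: step_map_pos)

lemma sol_odd_le:
  assumes "1 < lam" "0 \<le> b" "0 < x0" "0 < x1" "(lam - 1) * ln x1 + a \<le> 0"
  shows "sol lam a b x0 x1 (Suc (2 * k)) \<le> x1"
proof (induction k)
  case (Suc k)
  have "sol lam a b x0 x1 (Suc (2 * Suc k)) < sol lam a b x0 x1 (Suc (2 * k))"
    using assms Suc by (simp, intro step_map_less_if_small) (auto intro: sol_pos less_imp_le)
  with Suc show ?case
    by simp
qed simp

lemma continuous_on_sol:
  assumes "0 < x1"
  shows "continuous_on {0<..} (\<lambda>x0. sol lam a b x0 x1 n)"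
proof (induction n rule: induct_nat_012)
  case (ge2 n)
  have "\<forall>x0\<in>{0<..}. sol lam a b x0 x1 n \<noteq> 0"
    using sol_pos assms by (metis greaterThan_iff less_irrefl)
  with ge2 show ?case
    unfolding sol_Suc_Suc step_map_def by (intro continuous_intros)
qed (auto intro: continuous_intros)

lemma sol_threshold_periodic:
  assumes "1 < lam" "a = (lam - 1) * (1 - ln (lam - 1))"
  shows "sol lam a b (lam - 1) 0 (2 * k) = lam - 1 \<and> sol lam a b (lam - 1) 0 (Suc (2 * k)) = 0"
proof (induction k)
  case (Suc k)
  have "step_map lam a b (lam - 1) 0 = exp (lam * ln (lam - 1) + a - (lam - 1))"
    using assms(1) by (simp add: step_map_eq_exp)
  also have "\<dots> = exp (ln (lam - 1))"
    using assms(2) by (simp add: algebra_simps)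
  finally have "step_map lam a b (lam - 1) 0 = lam - 1"
    using assms(1) by simp
  with Suc show ?case
    by simp
qed simp

definition trapping_region :: "real \<Rightarrow> real \<Rightarrow> (real \<times> real) set" where
  "trapping_region xs c = {xs..c} \<times> {0..xs} \<union> {0..xs} \<times> {xs..c}"

lemma step_map_trapping_region:
  assumes "1 < lam" "0 < b" "0 < xs" "step_map lam a b xs xs = xs"
    and "a \<le> lam - (lam - 1) * ln lam"
    and "(u, v) \<in> trapping_region xs lam"
  shows "(v, step_map lam a b u v) \<in> trapping_region xs lam"
proof -
  from assms(6) consider "xs \<le> u" "u \<le> lam" "0 \<le> v" "v \<le> xs" | "0 \<le> u" "u \<le> xs" "xs \<le> v" "v \<le> lam"
    by (auto simp: trapping_region_def)
  then show ?thesis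
  proof cases
    case 1
    have "xs = step_map lam a b xs xs"
      using assms(4) by simp
    also have "\<dots> \<le> step_map lam a b xs v"
      using 1 assms(2) by (intro step_map_antimono_right) auto
    also have "\<dots> \<le> step_map lam a b u v"
      using 1 assms(3) by (intro step_map_mono) auto
    finally have "xs \<le> step_map lam a b u v" .
    moreover have "step_map lam a b u v \<le> lam"
      using 1 assms by (intro step_map_le_lam) auto
    ultimately show ?thesis
      using 1 by (auto simp: trapping_region_def)
  next
    case 2
    have "step_map lam a b u v \<le> step_map lam a b u xs"
      using 2 assms(2) by (intro step_map_antimono_right) auto
    also have "\<dots> \<le> step_map lam a b xs xs"
      using 2 by (intro step_map_mono) auto
    finally have "step_map lam a b u v \<le> xs"
      using assms(4) by simp
    then show ?thesis
      using 2 step_map_nonneg by (auto simp: trapping_region_def)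
  qed
qed

lemma sol_not_tendsto_zero_if_trapped:
  assumes "1 < lam" "0 < b" "0 < xs" "step_map lam a b xs xs = xs"
    and "a \<le> lam - (lam - 1) * ln lam"
    and "(sol lam a b x0 x1 m, sol lam a b x0 x1 (Suc m)) \<in> trapping_region xs lam"
  shows "\<not> sol lam a b x0 x1 \<longlonglongrightarrow> 0"
proof -
  have trapped: "(sol lam a b x0 x1 n, sol lam a b x0 x1 (Suc n)) \<in> trapping_region xs lam"
    if "m \<le> n" for n
    using that
  proof (induction n rule: dec_induct)
    case (step n)
    then show ?case
      using step_map_trapping_region[OF assms(1-5)] by simp
  qed (rule assms(6))
  have "xs \<le> sol lam a b x0 x1 n \<or> xs \<le> sol lam a b x0 x1 (Suc n)" if "m \<le> n" for n
    using trapped[OF that] by (auto simp: trapping_region_def)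
  then have "frequently (\<lambda>n. xs \<le> sol lam a b x0 x1 n) sequentially"
    unfolding frequently_sequentially by (meson le_SucI le_trans nat_le_linear)
  then show ?thesis
    by (rule not_tendsto_zero_if_frequently_ge[OF assms(3)])
qed

lemma exists_sol_below_fixed_point_not_tendsto_zero:
  assumes "1 < lam" "0 < b" "0 < xs" "step_map lam a b xs xs = xs"
    and "a \<le> lam - (lam - 1) * ln lam"
  shows "\<exists>x0 x1. x0 \<in> {0<..<xs} \<and> x1 \<in> {0<..<xs} \<and>
           (\<forall>n. 0 < sol lam a b x0 x1 n) \<and> \<not> sol lam a b x0 x1 \<longlonglongrightarrow> 0"
proof -
  let ?x1 = "xs / 2"
  have "xs < step_map lam a b xs ?x1"
  proof -
    have "step_map lam a b xs ?x1 = step_map lam a b xs xs * exp (b * (xs - ?x1))"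
      by (simp add: step_map_def mult.assoc exp_add[symmetric] algebra_simps)
    then show ?thesis
      using assms(2,3,4) by simp
  qed
  moreover have "((\<lambda>t. step_map lam a b t ?x1) \<longlongrightarrow> step_map lam a b xs ?x1) (at_left xs)"
    unfolding step_map_def using assms(3) by (intro tendsto_intros) auto
  ultimately have "eventually (\<lambda>t. xs < step_map lam a b t ?x1) (at_left xs)"
    by (simp add: order_tendstoD(1))
  moreover have "eventually (\<lambda>t. t \<in> {0<..<xs}) (at_left xs)"
    using assms(3) by (rule eventually_at_left_real)
  ultimately obtain t where t: "0 < t" "t < xs" "xs < step_map lam a b t ?x1"
    using eventually_happens'[OF trivial_limit_at_left_real eventually_conj] by fastforce
  moreover have "step_map lam a b t ?x1 \<le> lam"
    using assms t by (intro step_map_le_lam) auto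
  ultimately have "(sol lam a b t ?x1 1, sol lam a b t ?x1 (Suc 1)) \<in> trapping_region xs lam"
    using assms(3) by (auto simp: trapping_region_def)
  then have "\<not> sol lam a b t ?x1 \<longlonglongrightarrow> 0"
    by (rule sol_not_tendsto_zero_if_trapped[OF assms])
  moreover have "\<forall>n. 0 < sol lam a b t ?x1 n"
    using t assms(3) by (auto intro: sol_pos)
  ultimately show ?thesis
    using t assms(3) by (intro exI[of _ t] exI[of _ ?x1]) auto
qed

lemma obtain_small_level:
  fixes lam a b :: real
  assumes "1 < lam" "0 < b" "(lam - 1) * (1 - ln (lam - 1)) < a"
  obtains e where "0 < e" "e < lam - 1" "b * e < a - (lam - 1) * (1 - ln (lam - 1))"
    "(lam - 1) * ln e + a \<le> 0"
proof -
  let ?T = "(lam - 1) * (1 - ln (lam - 1))"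
  define e where "e = min (min ((a - ?T) / (2 * b)) ((lam - 1) / 2)) (exp (- a / (lam - 1)))"
  have "e \<le> (lam - 1) / 2"
    unfolding e_def by (meson min.cobounded1 min.cobounded2 order.trans)
  then have e: "0 < e" "e < lam - 1"
    using assms by (auto simp: e_def)
  have "b * e \<le> b * ((a - ?T) / (2 * b))"
    using assms by (intro mult_left_mono) (auto simp: e_def)
  then have be: "b * e < a - ?T"
    using assms by simp
  have "e \<le> exp (- a / (lam - 1))"
    by (simp add: e_def)
  then have "ln e \<le> - a / (lam - 1)"
    using e(1) by (metis exp_gt_zero ln_exp ln_le_cancel_iff)
  then have "(lam - 1) * ln e + a \<le> 0"
    using assms(1) by (simp add: field_simps)
  with e be show ?thesis
    by (rule that)
qed

lemma exists_positive_sol_not_tendsto_zero: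
  assumes "1 < lam" "0 < b" "(lam - 1) * (1 - ln (lam - 1)) < a"
  shows "\<exists>x0 x1. (\<forall>n. 0 < sol lam a b x0 x1 n) \<and> \<not> sol lam a b x0 x1 \<longlonglongrightarrow> 0"
proof -
  let ?T = "(lam - 1) * (1 - ln (lam - 1))"
  obtain e where e: "0 < e" "e < lam - 1" and be: "b * e < a - ?T" and small: "(lam - 1) * ln e + a \<le> 0"
    using obtain_small_level[OF assms] .
  define s where "s x k = sol lam a b x e (2 * k)" for x k
  have odd: "0 < sol lam a b x e (Suc (2 * k)) \<and> sol lam a b x e (Suc (2 * k)) \<le> e" if "0 < x" for x k
    using assms that e small by (auto intro: sol_pos sol_odd_le)
  have s_Suc: "s x (Suc k) = step_map lam a b (s x k) (sol lam a b x e (Suc (2 * k)))" for x k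
    by (simp add: s_def)
  have low: "s x (Suc k) < e" if "0 < x" "s x k = e" for x k
    using assms e small odd[OF that(1), of k] that
    by (simp add: s_Suc, intro step_map_less_if_small) auto
  have high: "lam - 1 < s x (Suc k)" if "0 < x" "s x k = lam - 1" for x k
  proof -
    have "b * sol lam a b x e (Suc (2 * k)) \<le> b * e"
      using assms odd[OF that(1)] by (intro mult_left_mono) auto
    with be have "b * sol lam a b x e (Suc (2 * k)) < a - ?T"
      by linarith
    then show ?thesis
      using assms(1) that(2) by (simp add: s_Suc step_map_greater_at_peak)
  qed
  have "exits_below (s e) e (lam - 1)"
    using low[of e 0] e unfolding exits_below_def by (intro exI[of _ 1]) (simp add: s_def)
  moreover have "exits_above (s (lam - 1)) e (lam - 1)"
    using high[of "lam - 1" 0] e unfolding exits_above_def by (intro exI[of _ 1]) (simp add: s_def)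
  moreover have "continuous_on {0<..} (\<lambda>x. s x k)" for k
    unfolding s_def using e(1) by (rule continuous_on_sol)
  ultimately have "\<exists>x\<in>{e..lam - 1}. \<not> exits_below (s x) e (lam - 1) \<and> \<not> exits_above (s x) e (lam - 1)"
    using e by (intro exists_never_exits[where S = "{0<..}"]) auto
  then obtain x where x: "e \<le> x" "x \<le> lam - 1"
    "\<not> exits_below (s x) e (lam - 1)" "\<not> exits_above (s x) e (lam - 1)"
    by auto
  then have "e \<le> s x k" for k
    using stays_between_if_never_exits[of e "s x" "lam - 1"] low high e by (auto simp: s_def)
  then have "frequently (\<lambda>n. e \<le> sol lam a b x e n) sequentially"
    unfolding frequently_sequentially s_def by (metis mult_2 le_add2 order.trans)
  then have "\<not> sol lam a b x e \<longlonglongrightarrow> 0"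
    by (rule not_tendsto_zero_if_frequently_ge[OF e(1)])
  moreover have "\<forall>n. 0 < sol lam a b x e n"
    using x e by (auto intro: sol_pos)
  ultimately show ?thesis
    by blast
qed

lemma sol_tendsto_zero_below_threshold:
  assumes "1 < lam" "0 \<le> b" "a < (lam - 1) * (1 - ln (lam - 1))" "0 \<le> x0" "0 \<le> x1"
  shows "sol lam a b x0 x1 \<longlonglongrightarrow> 0"
proof (rule tendsto_zero_if_two_step_contraction)
  show "0 < exp (a - (lam - 1) * (1 - ln (lam - 1)))" "exp (a - (lam - 1) * (1 - ln (lam - 1))) < 1"
    using assms(3) by simp_all
  show "0 \<le> sol lam a b x0 x1 n" for n
    using assms(4,5) by (rule sol_nonneg)
  show "sol lam a b x0 x1 (Suc (Suc n)) \<le> exp (a - (lam - 1) * (1 - ln (lam - 1))) * sol lam a b x0 x1 n" for n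
    using assms by (simp add: step_map_le_contraction sol_nonneg)
qed

lemma exists_nonneg_sol_not_tendsto_zero:
  assumes "1 < lam" "0 < b" "(lam - 1) * (1 - ln (lam - 1)) \<le> a"
  shows "\<exists>x0 x1. 0 \<le> x0 \<and> 0 \<le> x1 \<and> \<not> sol lam a b x0 x1 \<longlonglongrightarrow> 0"
proof (cases "a = (lam - 1) * (1 - ln (lam - 1))")
  case True
  then have "frequently (\<lambda>n. lam - 1 \<le> sol lam a b (lam - 1) 0 n) sequentially"
    unfolding frequently_sequentially using sol_threshold_periodic[OF assms(1)]
    by (metis mult_2 le_add2 order.trans order.refl)
  then have "\<not> sol lam a b (lam - 1) 0 \<longlonglongrightarrow> 0"
    using assms(1) by (intro not_tendsto_zero_if_frequently_ge) auto
  with assms(1) show ?thesis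
    by (intro exI[of _ "lam - 1"] exI[of _ 0]) auto
next
  case False
  with assms have "(lam - 1) * (1 - ln (lam - 1)) < a"
    by simp
  then obtain x0 x1 where "\<forall>n. 0 < sol lam a b x0 x1 n" "\<not> sol lam a b x0 x1 \<longlonglongrightarrow> 0"
    using exists_positive_sol_not_tendsto_zero[OF assms(1,2)] by blast
  then show ?thesis
    by (metis less_imp_le sol.simps(1,2))
qed

theorem mainTheorem10:
  fixes lam a b :: real
  assumes "lam > 1" and "b > 0"
  shows
  "((\<forall>x0 x1. x0 \<ge> 0 \<longrightarrow> x1 \<ge> 0 \<longrightarrow> sol lam a b x0 x1 \<longlonglongrightarrow> 0)
      \<longleftrightarrow> a < (lam - 1) * (1 - ln (lam - 1)))
   \<and> ((lam - 1) * (1 - ln (lam - 1)) < a \<and> a < (lam - 1) * (1 - ln (lam - 1) + ln (b + 1))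
      \<longrightarrow> (\<not> (\<exists>x. fixed_pt lam a b x))
          \<and> (\<exists>x0 x1. (\<forall>n. sol lam a b x0 x1 n > 0) \<and> \<not> (sol lam a b x0 x1 \<longlonglongrightarrow> 0)))
   \<and> (\<forall>xs. b \<le> (lam - 1) / lam * exp (1 / (lam - 1)) - 1
          \<and> (lam - 1) * (1 - ln (lam - 1) + ln (b + 1)) \<le> a
          \<and> a \<le> lam - (lam - 1) * ln lam
          \<and> fixed_pt lam a b xs \<and> (\<forall>y. fixed_pt lam a b y \<longrightarrow> xs \<le> y)
      \<longrightarrow> (\<exists>x0 x1. x0 \<in> {0<..<xs} \<and> x1 \<in> {0<..<xs}
               \<and> (\<forall>n. sol lam a b x0 x1 n > 0) \<and> \<not> (sol lam a b x0 x1 \<longlonglongrightarrow> 0))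
        \<and> (\<forall>x0 x1. (x0, x1) \<in> ({xs..lam} \<times> {0..xs}) \<union> ({0..xs} \<times> {xs..lam})
               \<longrightarrow> \<not> (sol lam a b x0 x1 \<longlonglongrightarrow> 0)))"
proof -
  have part_a: "(\<forall>x0 x1. x0 \<ge> 0 \<longrightarrow> x1 \<ge> 0 \<longrightarrow> sol lam a b x0 x1 \<longlonglongrightarrow> 0)
      \<longleftrightarrow> a < (lam - 1) * (1 - ln (lam - 1))"
    using assms sol_tendsto_zero_below_threshold exists_nonneg_sol_not_tendsto_zero
    by (meson less_imp_le not_less)
  have part_b: "(lam - 1) * (1 - ln (lam - 1)) < a \<and> a < (lam - 1) * (1 - ln (lam - 1) + ln (b + 1))
      \<longrightarrow> (\<not> (\<exists>x. fixed_pt lam a b x))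
          \<and> (\<exists>x0 x1. (\<forall>n. sol lam a b x0 x1 n > 0) \<and> \<not> (sol lam a b x0 x1 \<longlonglongrightarrow> 0))"
    using assms no_fixed_pt exists_positive_sol_not_tendsto_zero by blast
  txt \<open>For part (c) only a positive fixed point and the bound on \<open>a\<close> are needed; the bound on
    \<open>b\<close> and the minimality of the fixed point serve in the paper to ensure that one exists.\<close>
  have part_c: "\<exists>x0 x1. x0 \<in> {0<..<xs} \<and> x1 \<in> {0<..<xs}
               \<and> (\<forall>n. sol lam a b x0 x1 n > 0) \<and> \<not> (sol lam a b x0 x1 \<longlonglongrightarrow> 0)"
    and part_d: "(x0, x1) \<in> ({xs..lam} \<times> {0..xs}) \<union> ({0..xs} \<times> {xs..lam})
               \<Longrightarrow> \<not> (sol lam a b x0 x1 \<longlonglongrightarrow> 0)"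
    if "a \<le> lam - (lam - 1) * ln lam" "fixed_pt lam a b xs" for xs x0 x1
    using that assms exists_sol_below_fixed_point_not_tendsto_zero
      sol_not_tendsto_zero_if_trapped[where m = 0] by (auto simp: fixed_pt_iff trapping_region_def)
  show ?thesis
    using part_a part_b part_c part_d by blast
qed

end
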